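(* Consider the two-layer system $$\dot{\mathbf{q}}=\mathbf{f}_0(\mathbf{q})+\mathbf{g}_0(\mathbf{q})\boldsymbol{\xi},\qquad \dot{\boldsymbol{\xi}}=\mathbf{f}_1(\mathbf{q},\boldsymbol{\xi})+\mathbf{g}_1(\mathbf{q},\boldsymbol{\xi})\mathbf{u},$$ with $\mathbf{q}\in\mathbb{R}^n$, $\boldsymbol{\xi}\in\mathbb{R}^p$, $\mathbf{u}\in\mathbb{R}^m$ and locally Lipschitz $\mathbf{f}_0,\mathbf{g}_0,\mathbf{f}_1,\mathbf{g}_1$. Let $h_0:\mathbb{R}^n\to\mathbb{R}$ be continuously differentiable, with $\mathcal{C}_0=\{\mathbf{q}:h_0(\mathbf{q})\ge0\}$. Suppose there exist a continuously differentiable $\mathbf{k}_0:\mathbb{R}^n\to\mathbb{R}^p$ and constants $\alpha,\varepsilon>0$ such that for all $\mathbf{q}\in\mathbb{R}^n$ $$L_{\mathbf{f}_0}h_0(\mathbf{q})+L_{\mathbf{g}_0}h_0(\mathbf{q})\mathbf{k}_0(\mathbf{q})\ge-\alpha h_0(\mathbf{q})+\tfrac{1}{\varepsilon}\|L_{\mathbf{g}_0}h_0(\mathbf{q})\|^2.$$ Suppose further there exist a tracking controller $\mathbf{k}:\mathbb{R}^n\times\mathbb{R}^p\to\mathbb{R}^m$, a continuously differentiable $V:\mathbb{R}^n\times\mathbb{R}^p\to\mathbb{R}_{\ge0}$ and constants $\gamma_1,\gamma_2,\gamma>0$ such that for all $(\mathbf{q},\boldsymbol{\xi})$: $\gamma_1\|\boldsymbol{\xi}-\mathbf{k}_0(\mathbf{q})\|^2\le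 V(\mathbf{q},\boldsymbol{\xi})\le\gamma_2\|\boldsymbol{\xi}-\mathbf{k}_0(\mathbf{q})\|^2$ and $\dot V(\mathbf{q},\boldsymbol{\xi})\le-\gamma V(\mathbf{q},\boldsymbol{\xi})$ along the closed-loop system with $\mathbf{u}=\mathbf{k}(\mathbf{q},\boldsymbol{\xi})$. Let $\mu>0$, $h(\mathbf{q},\boldsymbol{\xi})=h_0(\mathbf{q})-\frac{1}{\mu\gamma_1}V(\mathbf{q},\boldsymbol{\xi})$ and $\mathcal{C}=\{(\mathbf{q},\boldsymbol{\xi}):h(\mathbf{q},\boldsymbol{\xi})\ge0\}$. If $\gamma\ge\alpha+\frac{\varepsilon\mu}{4}$, then $\mathcal{C}$ is forward invariant for the closed-loop system with $\mathbf{u}=\mathbf{k}(\mathbf{q},\boldsymbol{\xi})$.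
   Context: $L_{\mathbf{f}_0}h_0(\mathbf{q})=\nabla h_0(\mathbf{q})\cdot\mathbf{f}_0(\mathbf{q})$, $L_{\mathbf{g}_0}h_0(\mathbf{q})=\nabla h_0(\mathbf{q})^\top\mathbf{g}_0(\mathbf{q})$; $\dot V$ denotes the derivative of $V$ along the closed-loop vector field. A set is forward invariant if every closed-loop trajectory starting in it remains in it on its maximal interval of existence. *)

theory Defs
  imports "HOL-Analysis.Analysis"
begin

definition loc_lipschitz :: "('a::metric_space \<Rightarrow> 'b::metric_space) \<Rightarrow> bool" where
  "loc_lipschitz f \<longleftrightarrow> (\<forall>x. \<exists>e>0. \<exists>L. L-lipschitz_on (ball x e) f)"

text \<open>Since the system is
  autonomous we start at time 0, and since every point of the forward part of a maximal
  interval lies in some compact interval [0,T] on which the maximal solution is a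
  solution, quantifying over all solutions on all intervals [0,T] is equivalent.\<close>
definition forward_invariant :: "('a::real_normed_vector \<Rightarrow> 'a) \<Rightarrow> 'a set \<Rightarrow> bool" where
  "forward_invariant F S \<longleftrightarrow>
     (\<forall>(x::real \<Rightarrow> 'a) T. (\<forall>t\<in>{0..T}. (x has_vector_derivative F (x t)) (at t within {0..T}))
        \<longrightarrow> x 0 \<in> S \<longrightarrow> (\<forall>t\<in>{0..T}. x t \<in> S))"

definition lie_f :: "(real^'n \<Rightarrow> real^'n) \<Rightarrow> (real^'n \<Rightarrow> real^'n) \<Rightarrow> real^'n \<Rightarrow> real" where
  "lie_f dh f q = dh q \<bullet> f q"

definition lie_g :: "(real^'n \<Rightarrow> real^'n) \<Rightarrow> (real^'n \<Rightarrow> real^'p^'n) \<Rightarrow> real^'n \<Rightarrow> real^'p" where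
  "lie_g dh g q = dh q v* g q"

end

theory Submission
  imports Defs
begin

text \<open>The barrier h = h0 - V/(\<mu> \<gamma>1) satisfies h' \<ge> -\<alpha> h along the closed loop.  Writing
  \<xi> = k0 q + (\<xi> - k0 q), the derivative of h0 gains the term L_g h0 (\<xi> - k0 q); Young's
  inequality trades it against the slack |L_g h0|^2/\<epsilon> of the first-layer barrier condition for
  a loss of (\<epsilon>/4)|\<xi> - k0 q|^2 \<le> (\<epsilon>/(4 \<gamma>1)) V, which the decay -\<gamma> V of V absorbs as soon as
  \<gamma> \<ge> \<alpha> + \<epsilon> \<mu>/4.  Then e^(\<alpha> t) h is nondecreasing along every solution, so h stays
  nonnegative.\<close>

lemma nonneg_preserved_if_deriv_ge_linear:
  fixes \<phi> \<phi>' :: "real \<Rightarrow> real"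
  assumes deriv: "\<And>s. s \<in> {0..T} \<Longrightarrow> (\<phi> has_real_derivative \<phi>' s) (at s within {0..T})"
    and lower: "\<And>s. s \<in> {0..T} \<Longrightarrow> \<phi>' s \<ge> - \<alpha> * \<phi> s"
    and start: "\<phi> 0 \<ge> 0"
    and t: "t \<in> {0..T}"
  shows "\<phi> t \<ge> 0"
proof -
  define \<psi> where "\<psi> = (\<lambda>s. exp (\<alpha> * s) * \<phi> s)"
  have \<psi>_deriv: "(\<psi> has_real_derivative exp (\<alpha> * s) * (\<alpha> * \<phi> s + \<phi>' s)) (at s within {0..T})"
    if "s \<in> {0..T}" for s
  proof -
    have "((\<lambda>s. exp (\<alpha> * s)) has_real_derivative exp (\<alpha> * s) * \<alpha>) (at s within {0..T})"
      by (auto intro!: derivative_eq_intros)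
    from DERIV_mult[OF this deriv[OF that]] show ?thesis
      unfolding \<psi>_def by (simp add: algebra_simps)
  qed
  have "\<psi> 0 \<le> \<psi> t"
  proof (rule DERIV_nonneg_imp_increasing_open[of 0 t])
    show "0 \<le> t" using t by simp
    fix s assume s: "0 < s" "s < t"
    then have "at s within {0..T} = at s" using t by (intro at_within_Icc_at) auto
    moreover have "exp (\<alpha> * s) * (\<alpha> * \<phi> s + \<phi>' s) \<ge> 0"
      using lower[of s] s t by simp
    ultimately show "\<exists>y. (\<psi> has_real_derivative y) (at s) \<and> 0 \<le> y"
      using \<psi>_deriv[of s] s t by auto
  next
    have "continuous_on {0..T} \<psi>"
      using \<psi>_deriv by (meson DERIV_continuous continuous_on_eq_continuous_within)
    then show "continuous_on {0..t} \<psi>" by (rule continuous_on_subset) (use t in auto)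
  qed
  with start have "exp (\<alpha> * t) * \<phi> t \<ge> 0" by (simp add: \<psi>_def)
  then show ?thesis by (simp add: zero_le_mult_iff)
qed

lemma young_product_le:
  fixes a b \<epsilon> :: real
  assumes "0 < \<epsilon>"
  shows "a * b \<le> a\<^sup>2 / \<epsilon> + \<epsilon> / 4 * b\<^sup>2"
proof -
  have "0 \<le> (a - \<epsilon> * b / 2)\<^sup>2 / \<epsilon>" using assms by simp
  also have "\<dots> = a\<^sup>2 / \<epsilon> + \<epsilon> / 4 * b\<^sup>2 - a * b"
    using assms by (simp add: field_simps power2_eq_square)
  finally show ?thesis by simp
qed

lemma backstepping_barrier_decay:
  fixes a \<xi> \<kappa> :: "'a::real_inner" and Lf h V W \<alpha> \<epsilon> \<gamma>1 \<gamma> \<mu> :: real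
  assumes cbf: "Lf + a \<bullet> \<kappa> \<ge> - \<alpha> * h + (1 / \<epsilon>) * (norm a)\<^sup>2"
    and V_lower: "\<gamma>1 * (norm (\<xi> - \<kappa>))\<^sup>2 \<le> V"
    and V_decay: "W \<le> - \<gamma> * V"
    and V_nonneg: "0 \<le> V"
    and pos: "0 < \<epsilon>" "0 < \<gamma>1" "0 < \<mu>"
    and gain: "\<gamma> \<ge> \<alpha> + \<epsilon> * \<mu> / 4"
  shows "Lf + a \<bullet> \<xi> - (1 / (\<mu> * \<gamma>1)) * W \<ge> - \<alpha> * (h - (1 / (\<mu> * \<gamma>1)) * V)"
proof -
  define c where "c = 1 / (\<mu> * \<gamma>1)"
  have c_pos: "0 < c" using pos by (simp add: c_def)
  have split: "a \<bullet> \<xi> = a \<bullet> \<kappa> + a \<bullet> (\<xi> - \<kappa>)"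
    by (simp add: inner_diff_right)
  have cauchy_schwarz: "- (norm a * norm (\<xi> - \<kappa>)) \<le> a \<bullet> (\<xi> - \<kappa>)"
    using norm_cauchy_schwarz[of "- a" "\<xi> - \<kappa>"] by simp
  have young: "norm a * norm (\<xi> - \<kappa>) \<le> (1 / \<epsilon>) * (norm a)\<^sup>2 + \<epsilon> / 4 * (norm (\<xi> - \<kappa>))\<^sup>2"
    using young_product_le[OF pos(1)] by simp
  have "\<epsilon> / 4 * (norm (\<xi> - \<kappa>))\<^sup>2 \<le> \<epsilon> / 4 * (V / \<gamma>1)"
    using V_lower pos by (intro mult_left_mono) (simp_all add: field_simps)
  also have "\<dots> = c * (\<epsilon> * \<mu> / 4) * V"
    using pos by (simp add: c_def field_simps)
  finally have tracking_loss: "\<epsilon> / 4 * (norm (\<xi> - \<kappa>))\<^sup>2 \<le> c * (\<epsilon> * \<mu> / 4) * V" .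
  have "c * (\<alpha> + \<epsilon> * \<mu> / 4) * V \<le> c * \<gamma> * V"
    using c_pos V_nonneg gain by (intro mult_right_mono mult_left_mono) simp_all
  also have "\<dots> \<le> - c * W"
    using mult_left_mono[OF V_decay, of c] c_pos by simp
  finally have "c * (\<alpha> + \<epsilon> * \<mu> / 4) * V \<le> - c * W" .
  with cbf split cauchy_schwarz young tracking_loss show ?thesis
    unfolding c_def[symmetric] by (simp add: algebra_simps)
qed

lemma forward_invariant_superlevel_set:
  fixes F :: "'a::real_normed_vector \<Rightarrow> 'a" and H :: "'a \<Rightarrow> real"
  assumes H_deriv: "\<And>y. (H has_derivative DH y) (at y)"
    and H_decay: "\<And>y. DH y (F y) \<ge> - \<alpha> * H y"
  shows "forward_invariant F {y. H y \<ge> 0}"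
  unfolding forward_invariant_def
proof (intro allI impI ballI)
  fix x :: "real \<Rightarrow> 'a" and T t
  assume sol: "\<forall>t\<in>{0..T}. (x has_vector_derivative F (x t)) (at t within {0..T})"
    and x0: "x 0 \<in> {y. H y \<ge> 0}" and t: "t \<in> {0..T}"
  have "((H \<circ> x) has_real_derivative DH (x s) (F (x s))) (at s within {0..T})"
    if "s \<in> {0..T}" for s
  proof -
    have "(x has_derivative (\<lambda>h. h *\<^sub>R F (x s))) (at s within {0..T})"
      using sol that by (simp add: has_vector_derivative_def)
    from has_derivative_compose[OF this H_deriv]
    have "((H \<circ> x) has_derivative (\<lambda>h. DH (x s) (F (x s)) * h)) (at s within {0..T})"
      using linear_scale[OF has_derivative_linear[OF H_deriv]] by (simp add: o_def mult.commute)
    then show ?thesis by (simp add: has_field_derivative_def)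
  qed
  then have "(H \<circ> x) t \<ge> 0"
    by (rule nonneg_preserved_if_deriv_ge_linear) (use H_decay x0 t in auto)
  then show "x t \<in> {y. H y \<ge> 0}" by simp
qed

theorem theorem12:
  fixes f0 :: "real^'n \<Rightarrow> real^'n"
    and g0 :: "real^'n \<Rightarrow> real^'p^'n"
    and f1 :: "(real^'n) \<times> (real^'p) \<Rightarrow> real^'p"
    and g1 :: "(real^'n) \<times> (real^'p) \<Rightarrow> real^'m^'p"
    and h0 :: "real^'n \<Rightarrow> real" and dh0 :: "real^'n \<Rightarrow> real^'n"
    and k0 :: "real^'n \<Rightarrow> real^'p" and Dk0 :: "real^'n \<Rightarrow> real^'n^'p"
    and k :: "(real^'n) \<times> (real^'p) \<Rightarrow> real^'m"
    and V :: "(real^'n) \<times> (real^'p) \<Rightarrow> real" and dV :: "(real^'n) \<times> (real^'p) \<Rightarrow> (real^'n) \<times> (real^'p)"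
    and \<alpha> \<epsilon> \<gamma>1 \<gamma>2 \<gamma> \<mu> :: real
  defines "F \<equiv> (\<lambda>(q, \<xi>). (f0 q + g0 q *v \<xi>, f1 (q, \<xi>) + g1 (q, \<xi>) *v k (q, \<xi>)))"
  assumes lip: "loc_lipschitz f0" "loc_lipschitz g0" "loc_lipschitz f1" "loc_lipschitz g1"
    and h0_C1: "\<And>q. (h0 has_derivative (\<lambda>v. dh0 q \<bullet> v)) (at q)" "continuous_on UNIV dh0"
    and k0_C1: "\<And>q. (k0 has_derivative (\<lambda>v. Dk0 q *v v)) (at q)" "continuous_on UNIV Dk0"
    and pos0: "\<alpha> > 0" "\<epsilon> > 0"
    and cbf0: "\<And>q. lie_f dh0 f0 q + lie_g dh0 g0 q \<bullet> k0 q
                   \<ge> - \<alpha> * h0 q + (1 / \<epsilon>) * (norm (lie_g dh0 g0 q))\<^sup>2"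
    and V_C1: "\<And>x. (V has_derivative (\<lambda>v. dV x \<bullet> v)) (at x)" "continuous_on UNIV dV"
    and V_nonneg: "\<And>x. V x \<ge> 0"
    and pos1: "\<gamma>1 > 0" "\<gamma>2 > 0" "\<gamma> > 0"
    and V_bounds: "\<And>q \<xi>. \<gamma>1 * (norm (\<xi> - k0 q))\<^sup>2 \<le> V (q, \<xi>)"
                  "\<And>q \<xi>. V (q, \<xi>) \<le> \<gamma>2 * (norm (\<xi> - k0 q))\<^sup>2"
    and V_decay: "\<And>x. dV x \<bullet> F x \<le> - \<gamma> * V x"
    and mu: "\<mu> > 0"
    and gain: "\<gamma> \<ge> \<alpha> + \<epsilon> * \<mu> / 4"
  shows "forward_invariant F {(q, \<xi>). h0 q - (1 / (\<mu> * \<gamma>1)) * V (q, \<xi>) \<ge> 0}"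
proof -
  define c where "c = 1 / (\<mu> * \<gamma>1)"
  define H where "H = (\<lambda>y. h0 (fst y) - c * V y)"
  have H_deriv: "(H has_derivative (\<lambda>v. dh0 (fst y) \<bullet> fst v - c * (dV y \<bullet> v))) (at y)" for y
  proof -
    have "((\<lambda>y. h0 (fst y)) has_derivative (\<lambda>v. dh0 (fst y) \<bullet> fst v)) (at y)"
      using has_derivative_compose[OF has_derivative_fst[OF has_derivative_ident] h0_C1(1)[of "fst y"]]
      by (simp add: o_def)
    from has_derivative_diff[OF this has_derivative_mult_right[OF V_C1(1)]]
    show ?thesis by (simp add: H_def)
  qed
  have H_decay: "dh0 (fst y) \<bullet> fst (F y) - c * (dV y \<bullet> F y) \<ge> - \<alpha> * H y" for y
  proof (cases y)
    case (Pair q \<xi>)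
    have "dh0 q \<bullet> (f0 q + g0 q *v \<xi>) = lie_f dh0 f0 q + lie_g dh0 g0 q \<bullet> \<xi>"
      by (simp add: lie_f_def lie_g_def dot_lmul_matrix inner_add_right)
    with backstepping_barrier_decay[OF cbf0 V_bounds(1) V_decay V_nonneg pos0(2) pos1(1) mu gain]
    show ?thesis by (simp add: Pair F_def H_def c_def)
  qed
  have "{(q, \<xi>). h0 q - (1 / (\<mu> * \<gamma>1)) * V (q, \<xi>) \<ge> 0} = {y. H y \<ge> 0}"
    by (auto simp: H_def c_def)
  with forward_invariant_superlevel_set[OF H_deriv H_decay] show ?thesis by simp
qed

end
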